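(* Let $G$ be a connected graph with a list-assignment $L$ such that $|L(u)|\ge\deg(u)+1$ for all $u\in V(G)$, and let $\alpha,\beta$ be $L$-colourings of $G$. Suppose there exist $v\in V(G)$ and distinct $w_1,w_2\in N(v)$ such that $\alpha(w_1)=\beta(w_1)$, $\alpha(w_1)=\alpha(w_2)$, $\beta(w_1)=\beta(w_2)$, and $G-\{w_1,w_2\}$ is connected. Then $\alpha\sim\beta$; furthermore, there exists a recolouring sequence from $\alpha$ to $\beta$ that recolours neither $w_1$ nor $w_2$.
   Context: An $L$-colouring is a proper colouring $\varphi$ with $\varphi(v)\in L(v)$ for all $v$. $\alpha\sim\beta$ means $\alpha$ can be transformed into $\beta$ by a sequence of single-vertex recolouring steps, each changing the colour of one vertex to another colour of its list and keeping the colouring a proper $L$-colouring. (In the paper's terminology, $w_1,w_2$ is a "very good pair" for $v$ with respect to both $\alpha$ and $\beta$.) *)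

theory Defs
  imports Main
begin

definition simple_graph :: "'a set \<Rightarrow> ('a \<Rightarrow> 'a \<Rightarrow> bool) \<Rightarrow> bool" where
  "simple_graph V E \<longleftrightarrow> finite V \<and> (\<forall>u w. E u w \<longrightarrow> u \<in> V \<and> w \<in> V)
     \<and> (\<forall>u w. E u w \<longrightarrow> E w u) \<and> (\<forall>u. \<not> E u u)"

definition degree :: "'a set \<Rightarrow> ('a \<Rightarrow> 'a \<Rightarrow> bool) \<Rightarrow> 'a \<Rightarrow> nat" where
  "degree V E u = card {w \<in> V. E u w}"

definition connected_on :: "'a set \<Rightarrow> ('a \<Rightarrow> 'a \<Rightarrow> bool) \<Rightarrow> bool" where
  "connected_on S E \<longleftrightarrow> S \<noteq> {} \<and>
     (\<forall>x\<in>S. \<forall>y\<in>S. (\<lambda>a b. a \<in> S \<and> b \<in> S \<and> E a b)\<^sup>*\<^sup>* x y)"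

definition L_colouring :: "'a set \<Rightarrow> ('a \<Rightarrow> 'a \<Rightarrow> bool) \<Rightarrow> ('a \<Rightarrow> 'c set) \<Rightarrow> ('a \<Rightarrow> 'c) \<Rightarrow> bool" where
  "L_colouring V E L \<phi> \<longleftrightarrow> (\<forall>u\<in>V. \<phi> u \<in> L u) \<and> (\<forall>u\<in>V. \<forall>w\<in>V. E u w \<longrightarrow> \<phi> u \<noteq> \<phi> w)"

definition recolour_step :: "'a set \<Rightarrow> ('a \<Rightarrow> 'c) \<Rightarrow> ('a \<Rightarrow> 'c) \<Rightarrow> bool" where
  "recolour_step V \<phi> \<psi> \<longleftrightarrow> (\<exists>x\<in>V. \<phi> x \<noteq> \<psi> x \<and> (\<forall>y\<in>V - {x}. \<phi> y = \<psi> y))"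

definition recolour_seq :: "'a set \<Rightarrow> ('a \<Rightarrow> 'a \<Rightarrow> bool) \<Rightarrow> ('a \<Rightarrow> 'c set)
    \<Rightarrow> ('a \<Rightarrow> 'c) \<Rightarrow> ('a \<Rightarrow> 'c) \<Rightarrow> ('a \<Rightarrow> 'c) list \<Rightarrow> bool" where
  "recolour_seq V E L \<alpha> \<beta> ps \<longleftrightarrow> ps \<noteq> []
     \<and> (\<forall>x\<in>V. hd ps x = \<alpha> x) \<and> (\<forall>x\<in>V. last ps x = \<beta> x)
     \<and> (\<forall>\<phi>\<in>set ps. L_colouring V E L \<phi>)
     \<and> (\<forall>i. Suc i < length ps \<longrightarrow> recolour_step V (ps ! i) (ps ! Suc i))"

definition reconf_equiv :: "'a set \<Rightarrow> ('a \<Rightarrow> 'a \<Rightarrow> bool) \<Rightarrow> ('a \<Rightarrow> 'c set)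
    \<Rightarrow> ('a \<Rightarrow> 'c) \<Rightarrow> ('a \<Rightarrow> 'c) \<Rightarrow> bool" where
  "reconf_equiv V E L \<alpha> \<beta> \<longleftrightarrow> (\<exists>ps. recolour_seq V E L \<alpha> \<beta> ps)"

end

theory Submission
  imports Defs
begin

text \<open>
  Freeze \<open>w1\<close> and \<open>w2\<close> in their common colour \<open>c\<close> and delete them, removing \<open>c\<close> from
  the lists of their neighbours. Every remaining vertex still has more colours than neighbours,
  and \<open>v\<close>, which lost two neighbours but at most one colour, even has a spare one. On a connected
  graph with such a degree-plus-one list assignment and one vertex with slack, any two colourings
  are reconfigurable: delete a slack vertex \<open>s\<close>, reconfigure the rest by induction, and replay
  the sequence with \<open>s\<close> present, moving \<open>s\<close> out of the way whenever it blocks a recolouring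
  (its slack provides a free colour); finally recolour \<open>s\<close>. Extending every colouring of the
  sequence by \<open>c\<close> on \<open>w1, w2\<close> gives the required sequence.
\<close>

definition recolour_move :: "'a set \<Rightarrow> ('a \<Rightarrow> 'a \<Rightarrow> bool) \<Rightarrow> ('a \<Rightarrow> 'c set)
    \<Rightarrow> ('a \<Rightarrow> 'c) \<Rightarrow> ('a \<Rightarrow> 'c) \<Rightarrow> bool" where
  "recolour_move V E L \<phi> \<psi> \<longleftrightarrow>
     L_colouring V E L \<phi> \<and> L_colouring V E L \<psi> \<and> recolour_step V \<phi> \<psi>"

definition induced_edge :: "'a set \<Rightarrow> ('a \<Rightarrow> 'a \<Rightarrow> bool) \<Rightarrow> 'a \<Rightarrow> 'a \<Rightarrow> bool" where
  "induced_edge S E a b \<longleftrightarrow> a \<in> S \<and> b \<in> S \<and> E a b"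

definition has_slack :: "'a set \<Rightarrow> ('a \<Rightarrow> 'a \<Rightarrow> bool) \<Rightarrow> ('a \<Rightarrow> 'c set) \<Rightarrow> 'a \<Rightarrow> bool" where
  "has_slack V E L t \<longleftrightarrow> degree V E t + 2 \<le> card (L t)"

definition reaches_slack :: "'a set \<Rightarrow> ('a \<Rightarrow> 'a \<Rightarrow> bool) \<Rightarrow> ('a \<Rightarrow> 'c set) \<Rightarrow> 'a \<Rightarrow> bool" where
  "reaches_slack V E L u \<longleftrightarrow> (\<exists>t\<in>V. has_slack V E L t \<and> (induced_edge V E)\<^sup>*\<^sup>* u t)"

lemma connected_on_iff_induced_edge:
  "connected_on S E \<longleftrightarrow> S \<noteq> {} \<and> (\<forall>x\<in>S. \<forall>y\<in>S. (induced_edge S E)\<^sup>*\<^sup>* x y)"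
  unfolding connected_on_def induced_edge_def[abs_def] ..

lemma L_colouring_subset: "L_colouring V E L \<phi> \<Longrightarrow> V' \<subseteq> V \<Longrightarrow> L_colouring V' E L \<phi>"
  unfolding L_colouring_def by blast

lemma degree_Diff:
  assumes "finite V"
  shows "degree V E u = degree (V - W) E u + card {w \<in> V \<inter> W. E u w}"
proof -
  have "{w \<in> V. E u w} = {w \<in> V - W. E u w} \<union> {w \<in> V \<inter> W. E u w}" by blast
  then show ?thesis
    unfolding degree_def using assms by (simp add: card_Un_disjoint disjoint_iff)
qed

lemma degree_Diff_le: "finite V \<Longrightarrow> degree (V - W) E u \<le> degree V E u"
  using degree_Diff[of V E u W] by simp

lemma degree_Diff_neighbour_less:
  assumes "finite V" "s \<in> V" "E u s"
  shows "degree (V - {s}) E u < degree V E u"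
proof -
  have "{w \<in> V \<inter> {s}. E u w} = {s}" using assms(2,3) by blast
  then show ?thesis using degree_Diff[OF assms(1), of E u "{s}"] by simp
qed

lemma has_slack_free_colour:
  assumes "finite V" "has_slack V E L s"
  obtains e where "e \<in> L s" "e \<noteq> d" "\<forall>w\<in>V. E s w \<longrightarrow> \<chi> w \<noteq> e"
proof -
  define F where "F = insert d (\<chi> ` {w \<in> V. E s w})"
  have "finite F" using assms(1) unfolding F_def by simp
  have "card F \<le> degree V E s + 1"
  proof -
    have "card (\<chi> ` {w \<in> V. E s w}) \<le> degree V E s"
      unfolding degree_def using assms(1) by (simp add: card_image_le)
    moreover have "card F \<le> Suc (card (\<chi> ` {w \<in> V. E s w}))"
      unfolding F_def using assms(1) by (simp add: card_insert_if)
    ultimately show ?thesis by simp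
  qed
  also have "\<dots> < card (L s)" using assms(2) unfolding has_slack_def by simp
  finally have "\<not> L s \<subseteq> F" using card_mono[OF \<open>finite F\<close>, of "L s"] by linarith
  then show thesis using that unfolding F_def by blast
qed

lemma recolour_move_fun_upd:
  assumes "symp E" "irreflp E" "L_colouring V E L \<chi>"
    and "x \<in> V" "d \<in> L x" "\<chi> x \<noteq> d" "\<forall>w\<in>V. E x w \<longrightarrow> \<chi> w \<noteq> d"
  shows "recolour_move V E L \<chi> (\<chi>(x := d))"
proof -
  have "(\<chi>(x := d)) u \<noteq> (\<chi>(x := d)) w" if "u \<in> V" "w \<in> V" "E u w" for u w
  proof -
    have "u \<noteq> w" using that(3) irreflpD[OF assms(2)] by metis
    moreover have "E w u" using that(3) sympD[OF assms(1)] by metis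
    ultimately show ?thesis using that assms(3,7) unfolding L_colouring_def by auto
  qed
  then have "L_colouring V E L (\<chi>(x := d))"
    using assms(3,4,5) unfolding L_colouring_def by simp
  moreover have "recolour_step V \<chi> (\<chi>(x := d))"
    using assms(4,6) unfolding recolour_step_def by auto
  ultimately show ?thesis using assms(3) unfolding recolour_move_def by blast
qed

lemma rtranclp_recolour_move_L_colouring:
  "(recolour_move V E L)\<^sup>*\<^sup>* \<phi> \<psi> \<Longrightarrow> L_colouring V E L \<phi> \<Longrightarrow> L_colouring V E L \<psi>"
  by (induction rule: rtranclp_induct) (auto simp: recolour_move_def)

lemma recolour_past_slack_neighbour:
  assumes "finite V" "symp E" "irreflp E" "L_colouring V E L \<chi>"
    and "x \<in> V" "d \<in> L x" "\<chi> x \<noteq> d" "\<forall>w\<in>V - {s}. E x w \<longrightarrow> \<chi> w \<noteq> d"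
    and "s \<in> V" "s \<noteq> x" "has_slack V E L s"
  obtains \<chi>' where "(recolour_move V E L)\<^sup>*\<^sup>* \<chi> \<chi>'" "\<chi>' x = d" "\<forall>w\<in>V - {s, x}. \<chi>' w = \<chi> w"
proof (cases "E x s \<and> \<chi> s = d")
  case False
  then have "recolour_move V E L \<chi> (\<chi>(x := d))"
    using assms by (intro recolour_move_fun_upd) auto
  then show thesis using that[of "\<chi>(x := d)"] by auto
next
  case True
  obtain e where e: "e \<in> L s" "e \<noteq> d" "\<forall>w\<in>V. E s w \<longrightarrow> \<chi> w \<noteq> e"
    using has_slack_free_colour[OF assms(1,11)] .
  have first: "recolour_move V E L \<chi> (\<chi>(s := e))"
    using assms True e by (intro recolour_move_fun_upd) auto
  have "L_colouring V E L (\<chi>(s := e))" using first unfolding recolour_move_def by blast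
  then have "recolour_move V E L (\<chi>(s := e)) (\<chi>(s := e, x := d))"
    using assms e by (intro recolour_move_fun_upd) auto
  with first have "(recolour_move V E L)\<^sup>*\<^sup>* \<chi> (\<chi>(s := e, x := d))" by auto
  then show thesis using that assms(10) by auto
qed

lemma recolour_move_lift:
  assumes "finite V" "symp E" "irreflp E" "s \<in> V" "has_slack V E L s"
    and "L_colouring V E L \<chi>" "\<forall>w\<in>V - {s}. \<chi> w = \<phi> w" "recolour_move (V - {s}) E L \<phi> \<psi>"
  obtains \<chi>' where "(recolour_move V E L)\<^sup>*\<^sup>* \<chi> \<chi>'" "\<forall>w\<in>V - {s}. \<chi>' w = \<psi> w"
proof -
  obtain x where x: "x \<in> V - {s}" "\<phi> x \<noteq> \<psi> x" "\<forall>w\<in>V - {s} - {x}. \<phi> w = \<psi> w"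
    and \<psi>: "L_colouring (V - {s}) E L \<psi>"
    using assms(8) unfolding recolour_move_def recolour_step_def by blast
  have "\<chi> w \<noteq> \<psi> x" if "w \<in> V - {s}" "E x w" for w
  proof -
    have "w \<noteq> x" using that(2) irreflpD[OF assms(3)] by metis
    then have "\<chi> w = \<psi> w" using that(1) x(3) assms(7) by simp
    then show ?thesis using that x(1) \<psi> unfolding L_colouring_def by metis
  qed
  moreover have "\<psi> x \<in> L x" using x \<psi> unfolding L_colouring_def by blast
  ultimately obtain \<chi>' where \<chi>': "(recolour_move V E L)\<^sup>*\<^sup>* \<chi> \<chi>'" "\<chi>' x = \<psi> x"
      "\<forall>w\<in>V - {s, x}. \<chi>' w = \<chi> w"
    using recolour_past_slack_neighbour[OF assms(1-3,6), of x "\<psi> x" s] x assms(4,5,7) by auto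
  have "\<chi>' w = \<psi> w" if "w \<in> V - {s}" for w
    using that \<chi>'(2,3) x(3) assms(7) by (cases "w = x") auto
  then show thesis using that \<chi>'(1) by blast
qed

lemma rtranclp_recolour_move_lift:
  assumes "finite V" "symp E" "irreflp E" "s \<in> V" "has_slack V E L s"
    and "L_colouring V E L \<phi>" "(recolour_move (V - {s}) E L)\<^sup>*\<^sup>* \<phi> \<psi>"
  obtains \<chi> where "(recolour_move V E L)\<^sup>*\<^sup>* \<phi> \<chi>" "\<forall>w\<in>V - {s}. \<chi> w = \<psi> w"
  using assms(7) that
proof (induction arbitrary: thesis rule: rtranclp_induct)
  case (step \<psi> \<psi>')
  obtain \<chi> where \<chi>: "(recolour_move V E L)\<^sup>*\<^sup>* \<phi> \<chi>" "\<forall>w\<in>V - {s}. \<chi> w = \<psi> w"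
    using step.IH by blast
  have "L_colouring V E L \<chi>" using rtranclp_recolour_move_L_colouring[OF \<chi>(1) assms(6)] .
  then obtain \<chi>' where "(recolour_move V E L)\<^sup>*\<^sup>* \<chi> \<chi>'" "\<forall>w\<in>V - {s}. \<chi>' w = \<psi>' w"
    using recolour_move_lift[OF assms(1-5) _ \<chi>(2) step.hyps(2)] by blast
  then show thesis using step.prems \<chi>(1) by (meson rtranclp_trans)
qed blast

lemma recolour_single_disagreement:
  assumes "symp E" "irreflp E" "L_colouring V E L \<chi>" "L_colouring V E L \<psi>" "s \<in> V"
    and "\<forall>x\<in>V - {s}. \<chi> x = \<psi> x"
  shows "(recolour_move V E L)\<^sup>*\<^sup>* \<chi> (\<chi>(s := \<psi> s))"
proof (cases "\<chi> s = \<psi> s")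
  case True
  then show ?thesis by (simp flip: True)
next
  case False
  have "\<chi> w \<noteq> \<psi> s" if "w \<in> V" "E s w" for w
  proof -
    have "w \<noteq> s" using that(2) irreflpD[OF assms(2)] by metis
    then have "\<chi> w = \<psi> w" using that(1) assms(6) by simp
    then show ?thesis using that assms(4,5) unfolding L_colouring_def by metis
  qed
  moreover have "\<psi> s \<in> L s" using assms(4,5) unfolding L_colouring_def by blast
  ultimately have "recolour_move V E L \<chi> (\<chi>(s := \<psi> s))"
    using assms(1-3,5) False by (intro recolour_move_fun_upd) auto
  then show ?thesis by (simp add: r_into_rtranclp)
qed

text \<open>A path to a slack vertex either avoids \<open>s\<close>, or its vertex just before \<open>s\<close> loses a
  neighbour and so gains slack.\<close>

lemma reaches_slack_Diff:
  assumes "finite V" "s \<in> V" "\<forall>x\<in>V. degree V E x + 1 \<le> card (L x)"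
    and "reaches_slack V E L u" "u \<in> V - {s}"
  shows "reaches_slack (V - {s}) E L u"
proof -
  obtain t where "has_slack V E L t" "(induced_edge V E)\<^sup>*\<^sup>* u t"
    using assms(4) unfolding reaches_slack_def by blast
  from this(2,1) assms(5) show ?thesis
  proof (induction rule: converse_rtranclp_induct)
    case base
    then show ?case
      using degree_Diff_le[OF assms(1), of "{s}" E t]
      unfolding reaches_slack_def has_slack_def by force
  next
    case (step u y)
    show ?case
    proof (cases "y = s")
      case True
      then have "has_slack (V - {s}) E L u"
        using step degree_Diff_neighbour_less[OF assms(1,2)] assms(3)
        unfolding induced_edge_def has_slack_def by fastforce
      then show ?thesis using step.prems(2) unfolding reaches_slack_def by blast
    next
      case False
      then have "induced_edge (V - {s}) E u y" "y \<in> V - {s}"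
        using step.hyps(1) step.prems(2) unfolding induced_edge_def by auto
      then show ?thesis using step.IH step.prems(1)
        unfolding reaches_slack_def by (meson converse_rtranclp_into_rtranclp)
    qed
  qed
qed

lemma recolour_moves_if_reaches_slack:
  assumes "finite V" "symp E" "irreflp E" "\<forall>u\<in>V. degree V E u + 1 \<le> card (L u)"
    and "\<forall>u\<in>V. reaches_slack V E L u" "L_colouring V E L \<phi>" "L_colouring V E L \<psi>"
  shows "\<exists>\<chi>. (recolour_move V E L)\<^sup>*\<^sup>* \<phi> \<chi> \<and> (\<forall>x\<in>V. \<chi> x = \<psi> x)"
  using assms(1,4-7)
proof (induction V rule: finite_psubset_induct)
  case (psubset V)
  show ?case
  proof (cases "V = {}")
    case True
    then show ?thesis by blast
  next
    case False
    then obtain s where s: "s \<in> V" "has_slack V E L s"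
      using psubset.prems(2) unfolding reaches_slack_def by blast
    have "degree (V - {s}) E u + 1 \<le> card (L u)" if "u \<in> V - {s}" for u
      using that psubset.prems(1) degree_Diff_le[OF psubset.hyps(1), of "{s}" E u] by force
    moreover have "\<forall>u\<in>V - {s}. reaches_slack (V - {s}) E L u"
      using reaches_slack_Diff[OF psubset.hyps(1) s(1) psubset.prems(1)] psubset.prems(2) by blast
    moreover have "L_colouring (V - {s}) E L \<phi>" "L_colouring (V - {s}) E L \<psi>"
      using psubset.prems(3,4) L_colouring_subset by blast+
    moreover have "V - {s} \<subset> V" using s(1) by blast
    ultimately obtain \<chi>' where \<chi>': "(recolour_move (V - {s}) E L)\<^sup>*\<^sup>* \<phi> \<chi>'"
        "\<forall>x\<in>V - {s}. \<chi>' x = \<psi> x"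
      using psubset.IH[of "V - {s}"] by blast
    obtain \<chi> where \<chi>: "(recolour_move V E L)\<^sup>*\<^sup>* \<phi> \<chi>" "\<forall>x\<in>V - {s}. \<chi> x = \<psi> x"
      using rtranclp_recolour_move_lift[OF psubset.hyps(1) assms(2,3) s psubset.prems(3) \<chi>'(1)]
        \<chi>'(2) by auto
    have "L_colouring V E L \<chi>"
      using rtranclp_recolour_move_L_colouring \<chi>(1) psubset.prems(3) .
    then have "(recolour_move V E L)\<^sup>*\<^sup>* \<chi> (\<chi>(s := \<psi> s))"
      using recolour_single_disagreement[OF assms(2,3) _ psubset.prems(4) s(1) \<chi>(2)] by blast
    moreover have "\<forall>x\<in>V. (\<chi>(s := \<psi> s)) x = \<psi> x" using \<chi>(2) by simp
    ultimately show ?thesis using \<chi>(1) by (meson rtranclp_trans)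
  qed
qed

lemma rtranclp_imp_successively:
  assumes "R\<^sup>*\<^sup>* x y"
  obtains ps where "ps \<noteq> []" "hd ps = x" "last ps = y" "successively R ps"
  using assms
proof (induction arbitrary: thesis rule: rtranclp_induct)
  case base
  show thesis by (rule base.prems[of "[x]"]) simp_all
next
  case (step y z)
  obtain ps where "ps \<noteq> []" "hd ps = x" "last ps = y" "successively R ps"
    using step.IH by blast
  then show thesis
    using step.prems[of "ps @ [z]"] step.hyps(2) by (simp add: successively_append_iff)
qed

lemma successively_invariant:
  assumes "successively R ps" "P (hd ps)" "\<And>x y. R x y \<Longrightarrow> P y" "x \<in> set ps"
  shows "P x"
  using assms(1,2,4)
proof (induction ps)
  case (Cons a ps)
  show ?case
  proof (cases "x = a")
    case True
    then show ?thesis using Cons.prems(2) by simp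
  next
    case False
    then have "x \<in> set ps" "ps \<noteq> []" using Cons.prems(3) by auto
    moreover have "R a (hd ps)" "successively R ps"
      using Cons.prems(1) \<open>ps \<noteq> []\<close> by (auto simp: successively_Cons)
    ultimately show ?thesis using Cons.IH assms(3) by blast
  qed
qed simp

lemma recolour_seq_if_successively:
  assumes "successively (\<lambda>\<phi> \<psi>. recolour_move V E L \<phi> \<psi> \<and> P \<phi> \<psi>) ps" "ps \<noteq> []"
    and "L_colouring V E L (hd ps)" "\<forall>x\<in>V. hd ps x = \<alpha> x" "\<forall>x\<in>V. last ps x = \<beta> x"
  shows "recolour_seq V E L \<alpha> \<beta> ps" "\<forall>i. Suc i < length ps \<longrightarrow> P (ps ! i) (ps ! Suc i)"
proof -
  have "\<forall>\<phi>\<in>set ps. L_colouring V E L \<phi>"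
    using successively_invariant[where P = "L_colouring V E L", OF assms(1,3)]
    unfolding recolour_move_def by blast
  then show "recolour_seq V E L \<alpha> \<beta> ps"
    using assms successively_nth[OF assms(1)] unfolding recolour_seq_def recolour_move_def by blast
  show "\<forall>i. Suc i < length ps \<longrightarrow> P (ps ! i) (ps ! Suc i)"
    using successively_nth[OF assms(1)] by blast
qed

definition lists_avoiding_near :: "('a \<Rightarrow> 'a \<Rightarrow> bool) \<Rightarrow> 'a set \<Rightarrow> 'c \<Rightarrow> ('a \<Rightarrow> 'c set) \<Rightarrow> 'a \<Rightarrow> 'c set" where
  "lists_avoiding_near E W c L u = (if \<exists>w\<in>W. E u w then L u - {c} else L u)"

text \<open>Losing any positive number of neighbours in \<open>W\<close> costs at most the one colour \<open>c\<close>.\<close>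

lemma card_lists_avoiding_near:
  assumes "finite V" "W \<subseteq> V" "degree V E u + 1 \<le> card (L u)"
  shows "degree (V - W) E u + max 1 (card {w \<in> W. E u w}) \<le> card (lists_avoiding_near E W c L u)"
proof -
  have degree: "degree V E u = degree (V - W) E u + card {w \<in> W. E u w}"
    using degree_Diff[OF assms(1), of E u W] assms(2) by (simp add: Int_absorb1)
  show ?thesis
  proof (cases "\<exists>w\<in>W. E u w")
    case True
    moreover have "finite {w \<in> W. E u w}"
      by (rule finite_subset[OF _ assms(1)]) (use assms(2) in blast)
    ultimately have "card {w \<in> W. E u w} \<noteq> 0" by auto
    moreover have "card (L u) - 1 \<le> card (L u - {c})"
      using diff_card_le_card_Diff[of "{c}" "L u"] by simp
    ultimately show ?thesis
      using True assms(3) degree unfolding lists_avoiding_near_def by (simp add: max_def)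
  next
    case False
    then show ?thesis using assms(3) degree unfolding lists_avoiding_near_def by simp
  qed
qed

lemma L_colouring_lists_avoiding_near:
  assumes "L_colouring V E L \<phi>" "W \<subseteq> V" "\<forall>w\<in>W. \<phi> w = c"
  shows "L_colouring (V - W) E (lists_avoiding_near E W c L) \<phi>"
  using assms unfolding L_colouring_def lists_avoiding_near_def by fastforce

lemma L_colouring_override_on:
  assumes "L_colouring (V - W) E (lists_avoiding_near E W c L) \<phi>" "symp E"
    and "\<forall>w\<in>W. c \<in> L w" "\<forall>w\<in>W. \<forall>w'\<in>W. \<not> E w w'"
  shows "L_colouring V E L (override_on \<phi> (\<lambda>_. c) W)"
proof -
  have avoids: "\<phi> u \<noteq> c" if "u \<in> V - W" "w \<in> W" "E u w" for u w
  proof -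
    have "\<phi> u \<in> lists_avoiding_near E W c L u" using assms(1) that(1) unfolding L_colouring_def by blast
    moreover have "\<exists>w\<in>W. E u w" using that(2,3) by blast
    ultimately show ?thesis unfolding lists_avoiding_near_def by simp
  qed
  have "override_on \<phi> (\<lambda>_. c) W u \<in> L u" if "u \<in> V" for u
    using assms(1,3) that unfolding L_colouring_def lists_avoiding_near_def
    by (cases "u \<in> W") (auto split: if_splits)
  moreover have "override_on \<phi> (\<lambda>_. c) W u \<noteq> override_on \<phi> (\<lambda>_. c) W w"
    if "u \<in> V" "w \<in> V" "E u w" for u w
  proof -
    have "E w u" using that(3) sympD[OF assms(2)] by metis
    then show ?thesis
      using that assms(1,4) avoids unfolding L_colouring_def
      by (cases "u \<in> W"; cases "w \<in> W") auto
  qed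
  ultimately show ?thesis unfolding L_colouring_def by blast
qed

lemma recolour_step_override_on:
  "recolour_step (V - W) \<phi> \<psi> \<Longrightarrow> recolour_step V (override_on \<phi> g W) (override_on \<psi> g W)"
  unfolding recolour_step_def override_on_def by auto

lemma recolour_move_override_on:
  assumes "recolour_move (V - W) E (lists_avoiding_near E W c L) \<phi> \<psi>" "symp E"
    and "\<forall>w\<in>W. c \<in> L w" "\<forall>w\<in>W. \<forall>w'\<in>W. \<not> E w w'"
  shows "recolour_move V E L (override_on \<phi> (\<lambda>_. c) W) (override_on \<psi> (\<lambda>_. c) W)"
  using assms(1) L_colouring_override_on[OF _ assms(2-4)] recolour_step_override_on
  unfolding recolour_move_def by metis

lemma recolour_seq_fixing_monochromatic_set:
  assumes "finite V" "symp E" "irreflp E" "W \<subseteq> V"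
    and "\<forall>u\<in>V. degree V E u + 1 \<le> card (L u)"
    and "\<forall>u\<in>V - W. reaches_slack (V - W) E (lists_avoiding_near E W c L) u"
    and "L_colouring V E L \<alpha>" "L_colouring V E L \<beta>" "\<forall>w\<in>W. \<alpha> w = c" "\<forall>w\<in>W. \<beta> w = c"
  obtains ps where "recolour_seq V E L \<alpha> \<beta> ps"
    "\<forall>i. Suc i < length ps \<longrightarrow> (\<forall>w\<in>W. (ps ! i) w = (ps ! Suc i) w)"
proof -
  let ?L' = "lists_avoiding_near E W c L"
  let ?extend = "\<lambda>\<phi>. override_on \<phi> (\<lambda>_. c) W"
  have colour_c: "\<forall>w\<in>W. c \<in> L w" using assms(4,7,9) unfolding L_colouring_def by auto
  have independent: "\<forall>w\<in>W. \<forall>w'\<in>W. \<not> E w w'"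
  proof (intro ballI notI)
    fix w w' assume "w \<in> W" "w' \<in> W" "E w w'"
    then have "\<alpha> w \<noteq> \<alpha> w'" using assms(4,7) unfolding L_colouring_def by blast
    then show False using \<open>w \<in> W\<close> \<open>w' \<in> W\<close> assms(9) by simp
  qed
  have "degree (V - W) E u + 1 \<le> card (?L' u)" if "u \<in> V - W" for u
    using card_lists_avoiding_near[OF assms(1,4), of E u L c] assms(5) that
    by (auto simp: max_def split: if_splits)
  moreover have "L_colouring (V - W) E ?L' \<alpha>" "L_colouring (V - W) E ?L' \<beta>"
    using L_colouring_lists_avoiding_near[OF assms(7,4,9)]
      L_colouring_lists_avoiding_near[OF assms(8,4,10)] by auto
  ultimately obtain \<chi> where \<chi>: "(recolour_move (V - W) E ?L')\<^sup>*\<^sup>* \<alpha> \<chi>" "\<forall>x\<in>V - W. \<chi> x = \<beta> x"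
    using recolour_moves_if_reaches_slack[OF finite_Diff[OF assms(1)] assms(2,3) _ assms(6)] by blast
  obtain ps where ps: "ps \<noteq> []" "hd ps = \<alpha>" "last ps = \<chi>"
      "successively (recolour_move (V - W) E ?L') ps"
    by (rule rtranclp_imp_successively[OF \<chi>(1)])
  have moves: "successively (\<lambda>\<phi> \<psi>. recolour_move V E L \<phi> \<psi> \<and> (\<forall>w\<in>W. \<phi> w = \<psi> w))
      (map ?extend ps)"
    unfolding successively_map using ps(4)
    by (rule successively_mono) (simp add: recolour_move_override_on[OF _ assms(2) colour_c independent])
  have "map ?extend ps \<noteq> []" using ps(1) by simp
  moreover have "hd (map ?extend ps) = \<alpha>"
    using ps(1,2) assms(9) by (auto simp: hd_map override_on_def)
  then have "L_colouring V E L (hd (map ?extend ps))" "\<forall>x\<in>V. hd (map ?extend ps) x = \<alpha> x"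
    using assms(7) by simp_all
  moreover have "\<forall>x\<in>V. last (map ?extend ps) x = \<beta> x"
    using ps(1,3) \<chi>(2) assms(10) by (simp add: last_map override_on_def)
  ultimately show thesis
    using that recolour_seq_if_successively[OF moves] by blast
qed

theorem mainTheorem9:
  fixes V :: "'a set" and E :: "'a \<Rightarrow> 'a \<Rightarrow> bool" and L :: "'a \<Rightarrow> 'c set"
    and \<alpha> \<beta> :: "'a \<Rightarrow> 'c" and v w1 w2 :: 'a
  assumes "simple_graph V E"
    and "connected_on V E"
    and "\<forall>u\<in>V. finite (L u) \<and> card (L u) \<ge> degree V E u + 1"
    and "L_colouring V E L \<alpha>" and "L_colouring V E L \<beta>"
    and "v \<in> V" and "E v w1" and "E v w2" and "w1 \<noteq> w2"
    and "\<alpha> w1 = \<beta> w1" and "\<alpha> w1 = \<alpha> w2" and "\<beta> w1 = \<beta> w2"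
    and "connected_on (V - {w1, w2}) E"
  shows "reconf_equiv V E L \<alpha> \<beta> \<and>
    (\<exists>ps. recolour_seq V E L \<alpha> \<beta> ps \<and>
       (\<forall>i. Suc i < length ps \<longrightarrow> (ps ! i) w1 = (ps ! Suc i) w1 \<and> (ps ! i) w2 = (ps ! Suc i) w2))"
proof -
  have fin: "finite V" and sym: "symp E" and irr: "irreflp E"
    and edges: "\<forall>u w. E u w \<longrightarrow> u \<in> V \<and> w \<in> V"
    using assms(1) unfolding simple_graph_def symp_def irreflp_def by auto
  define W where "W = {w1, w2}"
  define L' where "L' = lists_avoiding_near E W (\<alpha> w1) L"
  have W: "W \<subseteq> V" using edges assms(7,8) unfolding W_def by blast
  have v: "v \<in> V - W" using assms(6-8) irreflpD[OF irr] unfolding W_def by auto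
  have "{w \<in> W. E v w} = {w1, w2}" using assms(7,8) unfolding W_def by blast
  then have "card {w \<in> W. E v w} = 2" using assms(9) by simp
  then have "has_slack (V - W) E L' v"
    using card_lists_avoiding_near[OF fin W, of E v L "\<alpha> w1"] assms(3) v
    unfolding has_slack_def L'_def by simp
  moreover have "(induced_edge (V - W) E)\<^sup>*\<^sup>* u v" if "u \<in> V - W" for u
    using assms(13) that v unfolding connected_on_iff_induced_edge W_def by blast
  ultimately have reach: "\<forall>u\<in>V - W. reaches_slack (V - W) E L' u"
    using v unfolding reaches_slack_def by blast
  have degrees: "\<forall>u\<in>V. degree V E u + 1 \<le> card (L u)" using assms(3) by simp
  have "\<forall>w\<in>W. \<alpha> w = \<alpha> w1" "\<forall>w\<in>W. \<beta> w = \<alpha> w1"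
    using assms(10-12) unfolding W_def by auto
  from recolour_seq_fixing_monochromatic_set[OF fin sym irr W degrees reach[unfolded L'_def]
      assms(4,5) this]
  obtain ps where "recolour_seq V E L \<alpha> \<beta> ps"
      "\<forall>i. Suc i < length ps \<longrightarrow> (\<forall>w\<in>W. (ps ! i) w = (ps ! Suc i) w)"
    by blast
  then show ?thesis unfolding reconf_equiv_def W_def by auto
qed

end
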